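(* For every compact Hausdorff space $X$ there exist a zero-dimensional compact Hausdorff space $Z$ and a max-min Milyutin map $f\colon Z\to X$.
   Context: A max-min measure on a compact Hausdorff space $X$ is a functional $\mu\colon C(X)\to\mathbb R$ (not assumed continuous) such that $\mu(c_X)=c$ for constants $c$, $\mu(\varphi\vee\psi)=\mu(\varphi)\vee\mu(\psi)$, and $\mu(c\wedge\varphi)=c\wedge\mu(\varphi)$ for $c\in\mathbb R$. $J(X)$ is the set of max-min measures with the topology of pointwise convergence on $C(X)$; for continuous $f\colon X\to Y$, $J(f)(\mu)(\varphi)=\mu(\varphi\circ f)$. For a closed subset $A\subset X$, $J(A)$ is identified with its image $J(i)(J(A))\subset J(X)$ under the inclusion $i\colon A\to X$. A continuous surjection $f\colon Z\to X$ of compact Hausdorff spaces is a max-min Milyutin map if there exists a continuous map $s\colon X\to J(Z)$ with $s(x)\in J(f^{-1}(x))\subset J(Z)$ for every $x\in X$. A space is zero-dimensional if it has a base of clopen sets. *)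

theory Defs
  imports "HOL-Analysis.Analysis"
begin

text \<open>C(X): the real-valued continuous functions on the space X (as HOL functions;
  two such functions agreeing on the topspace represent the same element of C(X)).\<close>
definition Cfun :: "'a topology \<Rightarrow> ('a \<Rightarrow> real) set" where
  "Cfun X = {\<phi>. continuous_map X euclideanreal \<phi>}"

text \<open>A functional is represented by a HOL function on
  'a \<Rightarrow> real that is extensional on C(X) (value undefined outside C(X)) and
  well defined, i.e. depends only on the restriction of its argument to the topspace.\<close>
definition maxmin_measure :: "'a topology \<Rightarrow> (('a \<Rightarrow> real) \<Rightarrow> real) \<Rightarrow> bool" where
  "maxmin_measure X \<mu> \<longleftrightarrow>
     \<mu> \<in> extensional (Cfun X) \<and>
     (\<forall>\<phi>\<in>Cfun X. \<forall>\<psi>\<in>Cfun X. (\<forall>x\<in>topspace X. \<phi> x = \<psi> x) \<longrightarrow> \<mu> \<phi> = \<mu> \<psi>) \<and>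
     (\<forall>c::real. \<mu> (\<lambda>_. c) = c) \<and>
     (\<forall>\<phi>\<in>Cfun X. \<forall>\<psi>\<in>Cfun X. \<mu> (\<lambda>x. max (\<phi> x) (\<psi> x)) = max (\<mu> \<phi>) (\<mu> \<psi>)) \<and>
     (\<forall>c::real. \<forall>\<phi>\<in>Cfun X. \<mu> (\<lambda>x. min c (\<phi> x)) = min c (\<mu> \<phi>))"

definition Jset :: "'a topology \<Rightarrow> (('a \<Rightarrow> real) \<Rightarrow> real) set" where
  "Jset X = {\<mu>. maxmin_measure X \<mu>}"

definition Jtop :: "'a topology \<Rightarrow> (('a \<Rightarrow> real) \<Rightarrow> real) topology" where
  "Jtop X = subtopology (product_topology (\<lambda>_. euclideanreal) (Cfun X)) (Jset X)"

definition Jmap :: "'b topology \<Rightarrow> ('a \<Rightarrow> 'b) \<Rightarrow> (('a \<Rightarrow> real) \<Rightarrow> real) \<Rightarrow> (('b \<Rightarrow> real) \<Rightarrow> real)" where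
  "Jmap Y f \<mu> = restrict (\<lambda>\<phi>. \<mu> (\<phi> \<circ> f)) (Cfun Y)"

text \<open>J(A) for closed A \<subseteq> Z, identified with J(i)(J(A)) \<subseteq> J(Z), i the inclusion.\<close>
definition Jsub :: "'a topology \<Rightarrow> 'a set \<Rightarrow> (('a \<Rightarrow> real) \<Rightarrow> real) set" where
  "Jsub Z A = Jmap Z id ` Jset (subtopology Z A)"

definition maxmin_milyutin :: "'a topology \<Rightarrow> 'b topology \<Rightarrow> ('a \<Rightarrow> 'b) \<Rightarrow> bool" where
  "maxmin_milyutin Z X f \<longleftrightarrow>
     continuous_map Z X f \<and> f ` topspace Z = topspace X \<and>
     (\<exists>s. continuous_map X (Jtop Z) s \<and>
          (\<forall>x\<in>topspace X. s x \<in> Jsub Z {z \<in> topspace Z. f z = x}))"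

definition zero_dimensional :: "'a topology \<Rightarrow> bool" where
  "zero_dimensional X \<longleftrightarrow> neighbourhood_base_of (\<lambda>U. closedin X U \<and> openin X U) X"

end

theory Submission
  imports Defs
begin

(*
  Embed X in the cube [1/4,3/4]^I by continuous functions u_i that separate points (Urysohn),
  and expand each coordinate redundantly as  \<Sum>n. d_n / 2^(n+2)  with digits d_n \<in> {0,1,2}.
  The digit arrays coding points of X form a closed subspace Z of the compact zero-dimensional
  space {0,1,2}^(I \<times> \<nat>), and decoding is a continuous surjection f : Z \<rightarrow> X.

  For x \<in> X put s(x)(\<phi>) = sup min(\<phi> p, t) over the codes p of x all of whose row tails have
  values more than level(t) away from 0 and 1, level being an increasing bijection \<real> \<rightarrow> (0,1/4).
  Each s(x) is a max-min measure on the fibre over x.  Upper semicontinuity of x \<mapsto> s(x)(\<phi>)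
  follows from the compactness of Z.  Lower semicontinuity is where the redundancy of the digits
  is used: a code whose tails stay away from 0 and 1 can be changed beyond any finite prefix
  into a code of every sufficiently close point, at a small loss in the distance of the tails
  from 0 and 1.

  Finally Z is transported into the type 'a set set set; for finite X a discrete copy of X does.
*)

section \<open>Redundant binary expansions\<close>

definition digits_value :: "(nat \<Rightarrow> nat) \<Rightarrow> real" where
  "digits_value s = (\<Sum>n. real (s n) / 2^(n+2))"

definition digit_seq :: "(nat \<Rightarrow> nat) \<Rightarrow> bool" where
  "digit_seq s \<longleftrightarrow> (\<forall>n. s n \<le> 2)"

definition tails_within :: "real \<Rightarrow> (nat \<Rightarrow> nat) \<Rightarrow> bool" where
  "tails_within c s \<longleftrightarrow>
     (\<forall>j. c \<le> digits_value (\<lambda>n. s (n+j)) \<and> digits_value (\<lambda>n. s (n+j)) \<le> 1 - c)"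

lemma digit_seq_shift: "digit_seq s \<Longrightarrow> digit_seq (\<lambda>n. s (n+j))"
  by (simp add: digit_seq_def)

lemma tails_within_mono:
  assumes "c \<le> c'" "tails_within c' s" shows "tails_within c s"
  unfolding tails_within_def
proof
  fix j
  have "c' \<le> digits_value (\<lambda>n. s (n+j)) \<and> digits_value (\<lambda>n. s (n+j)) \<le> 1 - c'"
    using assms(2) unfolding tails_within_def by blast
  with assms(1) show "c \<le> digits_value (\<lambda>n. s (n+j)) \<and> digits_value (\<lambda>n. s (n+j)) \<le> 1 - c"
    by linarith
qed

lemma digit_term_le:
  assumes "digit_seq s" shows "real (s n) / 2^(n+2) \<le> (1/2)^(n+1)"
proof -
  have "real (s n) \<le> 2" using assms by (simp add: digit_seq_def)
  then have "real (s n) / 2^(n+2) \<le> 2 / 2^(n+2)" by (rule divide_right_mono) simp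
  also have "\<dots> = (1/2)^(n+1)" by (simp add: power_one_over)
  finally show ?thesis .
qed

lemma sums_half_powers: "(\<lambda>n::nat. (1/2::real)^(n+1)) sums 1"
  using sums_mult[OF geometric_sums[of "1/2::real"], of "1/2"] by simp

lemma summable_digits:
  assumes "digit_seq s" shows "summable (\<lambda>n. real (s n) / 2^(n+2))"
proof (rule summable_comparison_test)
  show "\<exists>N. \<forall>n\<ge>N. norm (real (s n) / 2^(n+2)) \<le> (1/2::real)^(n+1)"
    using digit_term_le[OF assms] by simp
qed (rule sums_summable[OF sums_half_powers])

lemma digits_value_nonneg: "digit_seq s \<Longrightarrow> 0 \<le> digits_value s"
  unfolding digits_value_def by (rule suminf_nonneg[OF summable_digits]) auto

lemma digits_value_le_1: "digit_seq s \<Longrightarrow> digits_value s \<le> 1"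
  unfolding digits_value_def
  using suminf_le[OF digit_term_le summable_digits sums_summable[OF sums_half_powers]]
    sums_unique[OF sums_half_powers] by simp

lemma digits_value_split:
  assumes "digit_seq s"
  shows "digits_value s = (\<Sum>n<k. real (s n) / 2^(n+2)) + digits_value (\<lambda>n. s (n+k)) / 2^k"
proof -
  have "(\<lambda>n. real (s (n+k)) / 2^(n+k+2)) = (\<lambda>n. real (s (n+k)) / 2^(n+2) / 2^k)"
    by (simp add: power_add field_simps)
  then have "(\<Sum>n. real (s (n+k)) / 2^(n+k+2)) = digits_value (\<lambda>n. s (n+k)) / 2^k"
    using suminf_divide[OF summable_digits[OF digit_seq_shift[OF assms, of k]], of "2^k"]
    by (simp add: digits_value_def)
  then show ?thesis
    using suminf_split_initial_segment[OF summable_digits[OF assms], of k]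
    by (simp add: digits_value_def)
qed

lemma digits_value_close:
  assumes "digit_seq s" "digit_seq s'" "\<And>n. n < k \<Longrightarrow> s n = s' n"
  shows "\<bar>digits_value s - digits_value s'\<bar> \<le> 1 / 2^k"
proof -
  have "(\<Sum>n<k. real (s n) / 2^(n+2)) = (\<Sum>n<k. real (s' n) / 2^(n+2))"
    using assms(3) by (intro sum.cong) auto
  then have "digits_value s - digits_value s' =
      (digits_value (\<lambda>n. s (n+k)) - digits_value (\<lambda>n. s' (n+k))) / 2^k"
    using digits_value_split[OF assms(1), of k] digits_value_split[OF assms(2), of k]
    by (simp add: diff_divide_distrib)
  moreover have "\<bar>digits_value (\<lambda>n. s (n+k)) - digits_value (\<lambda>n. s' (n+k))\<bar> \<le> 1"
    using digits_value_nonneg[OF digit_seq_shift, OF assms(1), of k]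
      digits_value_le_1[OF digit_seq_shift, OF assms(1), of k]
      digits_value_nonneg[OF digit_seq_shift, OF assms(2), of k]
      digits_value_le_1[OF digit_seq_shift, OF assms(2), of k]
    by (simp add: abs_le_iff)
  ultimately show ?thesis by (simp add: divide_right_mono)
qed

definition greedy_digit :: "real \<Rightarrow> nat" where
  "greedy_digit z = (if z \<le> 3/8 then 0 else if z < 5/8 then 1 else 2)"

definition greedy_shift :: "real \<Rightarrow> real" where
  "greedy_shift z = 2 * z - real (greedy_digit z) / 2"

definition greedy_digits :: "real \<Rightarrow> nat \<Rightarrow> nat" where
  "greedy_digits z n = greedy_digit ((greedy_shift ^^ n) z)"

lemma greedy_shift_iterate_within:
  assumes "0 \<le> c" "c \<le> 1/4" "c \<le> z" "z \<le> 1 - c"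
  shows "c \<le> (greedy_shift ^^ n) z \<and> (greedy_shift ^^ n) z \<le> 1 - c"
  by (induction n) (use assms in \<open>auto simp: greedy_shift_def greedy_digit_def\<close>)

lemma digit_seq_greedy_digits: "digit_seq (greedy_digits z)"
  by (simp add: digit_seq_def greedy_digits_def greedy_digit_def)

lemma greedy_digits_shift: "(\<lambda>n. greedy_digits z (n+j)) = greedy_digits ((greedy_shift ^^ j) z)"
  by (rule ext) (simp add: greedy_digits_def funpow_add)

lemma greedy_digits_partial_sum:
  "(\<Sum>n<N. real (greedy_digits z n) / 2^(n+2)) = z - (greedy_shift ^^ N) z / 2^N"
proof (induction N)
  case (Suc N)
  have "(greedy_shift ^^ N) z / 2^N =
      real (greedy_digits z N) / 2^(N+2) + (greedy_shift ^^ Suc N) z / 2^(Suc N)"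
    by (simp add: greedy_shift_def greedy_digits_def field_simps)
  with Suc show ?case by simp
qed simp

lemma digits_value_greedy_digits:
  assumes "0 \<le> z" "z \<le> 1"
  shows "digits_value (greedy_digits z) = z"
proof -
  have "\<bar>(greedy_shift ^^ N) z\<bar> \<le> 1" for N
    using greedy_shift_iterate_within[of 0 z N] assms by simp
  then have "(\<lambda>N. (greedy_shift ^^ N) z / 2^N) \<longlonglongrightarrow> 0"
    by (intro Lim_null_comparison[OF _ LIMSEQ_power_zero[of "1/2::real"]])
       (auto simp: power_one_over divide_right_mono)
  then have "(\<lambda>N. z - (greedy_shift ^^ N) z / 2^N) \<longlonglongrightarrow> z"
    using tendsto_diff[OF tendsto_const] by fastforce
  then have "(\<lambda>n. real (greedy_digits z n) / 2^(n+2)) sums z"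
    unfolding sums_def greedy_digits_partial_sum .
  then show ?thesis by (simp add: digits_value_def sums_iff)
qed

lemma tails_within_greedy_digits:
  assumes "0 \<le> c" "c \<le> 1/4" "c \<le> z" "z \<le> 1 - c"
  shows "tails_within c (greedy_digits z)"
  unfolding tails_within_def greedy_digits_shift
proof
  fix j
  have "c \<le> (greedy_shift ^^ j) z \<and> (greedy_shift ^^ j) z \<le> 1 - c"
    by (rule greedy_shift_iterate_within[OF assms])
  then show "c \<le> digits_value (greedy_digits ((greedy_shift ^^ j) z)) \<and>
      digits_value (greedy_digits ((greedy_shift ^^ j) z)) \<le> 1 - c"
    using assms(1) by (simp add: digits_value_greedy_digits)
qed

definition splice :: "nat \<Rightarrow> (nat \<Rightarrow> nat) \<Rightarrow> (nat \<Rightarrow> nat) \<Rightarrow> nat \<Rightarrow> nat" where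
  "splice k s0 s1 n = (if n < k then s0 n else s1 (n - k))"

lemma digit_seq_splice: "digit_seq s0 \<Longrightarrow> digit_seq s1 \<Longrightarrow> digit_seq (splice k s0 s1)"
  by (simp add: digit_seq_def splice_def)

lemma digits_value_splice:
  assumes "digit_seq s0" "digit_seq s1" "j \<le> k"
  shows "digits_value (\<lambda>n. splice k s0 s1 (n+j)) - digits_value (\<lambda>n. s0 (n+j)) =
           (digits_value s1 - digits_value (\<lambda>n. s0 (n+k))) / 2^(k-j)"
proof -
  have "(\<lambda>n. splice k s0 s1 (n + (k-j) + j)) = s1" using assms(3) by (auto simp: splice_def)
  moreover have "(\<Sum>n<k-j. real (splice k s0 s1 (n+j)) / 2^(n+2)) =
      (\<Sum>n<k-j. real (s0 (n+j)) / 2^(n+2))"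
    by (intro sum.cong) (auto simp: splice_def)
  ultimately show ?thesis
    using digits_value_split[OF digit_seq_shift[OF digit_seq_splice[OF assms(1,2)], of k j],
        of "k-j"]
      digits_value_split[OF digit_seq_shift[OF assms(1), of j], of "k-j"] assms(3)
    by (simp add: diff_divide_distrib)
qed

lemma tails_within_splice:
  assumes s0: "digit_seq s0" "tails_within c s0" and s1: "digit_seq s1" "tails_within (c - \<eta>) s1"
    and \<eta>: "0 \<le> \<eta>" "\<bar>digits_value s1 - digits_value (\<lambda>n. s0 (n+k))\<bar> \<le> \<eta>"
  shows "tails_within (c - \<eta>) (splice k s0 s1)"
  unfolding tails_within_def
proof
  fix j
  show "c - \<eta> \<le> digits_value (\<lambda>n. splice k s0 s1 (n+j)) \<and>
      digits_value (\<lambda>n. splice k s0 s1 (n+j)) \<le> 1 - (c - \<eta>)"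
  proof (cases "j \<le> k")
    case True
    have "\<eta> \<le> \<eta> * 2^(k-j)" using \<eta>(1) by (simp add: mult_le_cancel_left1)
    then have "\<bar>(digits_value s1 - digits_value (\<lambda>n. s0 (n+k))) / 2^(k-j)\<bar> \<le> \<eta>"
      using \<eta>(2) by (simp add: abs_divide divide_le_eq)
    then have "\<bar>digits_value (\<lambda>n. splice k s0 s1 (n+j)) - digits_value (\<lambda>n. s0 (n+j))\<bar> \<le> \<eta>"
      by (simp only: digits_value_splice[OF s0(1) s1(1) True])
    moreover have "c \<le> digits_value (\<lambda>n. s0 (n+j)) \<and> digits_value (\<lambda>n. s0 (n+j)) \<le> 1 - c"
      using s0(2) by (simp add: tails_within_def)
    ultimately show ?thesis by (auto simp: abs_le_iff)
  next
    case False
    then have "(\<lambda>n. splice k s0 s1 (n+j)) = (\<lambda>n. s1 (n + (j-k)))" by (auto simp: splice_def)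
    then show ?thesis using s1(2) by (simp add: tails_within_def)
  qed
qed

lemma splice_digits:
  assumes s0: "digit_seq s0" "tails_within c s0" and \<eta>: "0 < \<eta>" "\<eta> < c" "c \<le> 1/4"
    and y: "\<bar>y - digits_value s0\<bar> \<le> \<eta> / 2^k"
  obtains s where "digit_seq s" "\<forall>n<k. s n = s0 n" "digits_value s = y" "tails_within (c - \<eta>) s"
proof
  define d where "d = (y - digits_value s0) * 2^k"
  have d: "\<bar>d\<bar> \<le> \<eta>" using y by (simp add: d_def abs_mult le_divide_eq)
  define z where "z = digits_value (\<lambda>n. s0 (n+k)) + d"
  have "c \<le> digits_value (\<lambda>n. s0 (n+k)) \<and> digits_value (\<lambda>n. s0 (n+k)) \<le> 1 - c"
    using s0(2) by (simp add: tails_within_def)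
  then have z: "c - \<eta> \<le> z" "z \<le> 1 - (c - \<eta>)" using d by (auto simp: z_def abs_le_iff)
  define s1 where "s1 = greedy_digits z"
  have s1: "digit_seq s1" "digits_value s1 = z" "tails_within (c - \<eta>) s1"
    using z \<eta> digit_seq_greedy_digits digits_value_greedy_digits tails_within_greedy_digits
    by (auto simp: s1_def)
  show "digit_seq (splice k s0 s1)" using s0(1) s1(1) by (rule digit_seq_splice)
  show "\<forall>n<k. splice k s0 s1 n = s0 n" by (simp add: splice_def)
  show "digits_value (splice k s0 s1) = y"
    using digits_value_splice[OF s0(1) s1(1), of 0 k] s1(2) by (simp add: z_def d_def)
  show "tails_within (c - \<eta>) (splice k s0 s1)"
    using tails_within_splice[OF s0 s1(1,3)] \<eta>(1) d s1(2) by (simp add: z_def)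
qed

section \<open>Sup-min functionals\<close>

lemma Cfun_const [simp]: "(\<lambda>_. c) \<in> Cfun Z"
  by (simp add: Cfun_def)

lemma Cfun_max: "\<phi> \<in> Cfun Z \<Longrightarrow> \<psi> \<in> Cfun Z \<Longrightarrow> (\<lambda>z. max (\<phi> z) (\<psi> z)) \<in> Cfun Z"
  by (simp add: Cfun_def continuous_map_real_max)

lemma Cfun_min: "\<phi> \<in> Cfun Z \<Longrightarrow> (\<lambda>z. min c (\<phi> z)) \<in> Cfun Z"
  by (simp add: Cfun_def continuous_map_real_min)

lemma Cfun_bounded_above:
  assumes "compact_space Z" "\<phi> \<in> Cfun Z"
  shows "\<exists>B. \<forall>z\<in>topspace Z. \<phi> z \<le> B"
proof -
  have "compactin euclideanreal (\<phi> ` topspace Z)"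
    using assms by (intro image_compactin) (auto simp: Cfun_def compact_space_def)
  then obtain B where "\<forall>y\<in>\<phi> ` topspace Z. \<bar>y\<bar> \<le> B"
    by (meson bounded_real compact_imp_bounded compactin_euclidean_iff)
  then show ?thesis by (auto simp: abs_le_iff)
qed

lemma min_Sup_real:
  fixes S :: "real set"
  assumes "S \<noteq> {}" "bdd_above S"
  shows "min c (Sup S) = (SUP s\<in>S. min c s)"
  by (rule continuous_at_Sup_mono) (auto intro: continuous_intros monoI simp: assms)

text \<open>With \<open>W = A \<times> \<real>\<close> this is \<open>\<phi> \<mapsto> max\<^sub>A \<phi>\<close>; in general the second component of a
  pair caps the contribution of the point.\<close>
definition supmin :: "'z topology \<Rightarrow> ('z \<times> real) set \<Rightarrow> ('z \<Rightarrow> real) \<Rightarrow> real" where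
  "supmin Z W = restrict (\<lambda>\<phi>. SUP (p,t)\<in>W. min (\<phi> p) t) (Cfun Z)"

lemma bdd_above_supmin:
  assumes "compact_space Z" "\<phi> \<in> Cfun Z" "fst ` W \<subseteq> topspace Z"
  shows "bdd_above ((\<lambda>(p,t). min (\<phi> p) t) ` W)"
proof -
  obtain B where B: "\<forall>z\<in>topspace Z. \<phi> z \<le> B" using Cfun_bounded_above[OF assms(1,2)] ..
  show ?thesis
  proof (rule bdd_aboveI2)
    fix w assume "w \<in> W"
    then have "\<phi> (fst w) \<le> B" using B assms(3) by blast
    then show "(\<lambda>(p,t). min (\<phi> p) t) w \<le> B" by (simp add: case_prod_beta)
  qed
qed

lemma supmin_in_Jset:
  assumes Z: "compact_space Z" and W: "fst ` W \<subseteq> topspace Z"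
    and unbounded: "\<And>c. \<exists>p t. (p,t) \<in> W \<and> c \<le> t"
  shows "supmin Z W \<in> Jset Z"
proof -
  let ?S = "\<lambda>\<phi>. SUP (p,t)\<in>W. min (\<phi> p) t"
  have val: "supmin Z W \<phi> = ?S \<phi>" if "\<phi> \<in> Cfun Z" for \<phi>
    using that by (simp add: supmin_def)
  have ne: "W \<noteq> {}" using unbounded by blast
  have bdd: "bdd_above ((\<lambda>(p,t). min (\<phi> p) t) ` W)" if "\<phi> \<in> Cfun Z" for \<phi>
    using bdd_above_supmin[OF Z that W] .
  have const: "?S (\<lambda>_. c) = c" for c
  proof (rule antisym)
    show "?S (\<lambda>_. c) \<le> c" using ne by (intro cSUP_least) auto
    obtain p t where "(p,t) \<in> W" "c \<le> t" using unbounded by blast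
    then show "c \<le> ?S (\<lambda>_. c)"
      using bdd[OF Cfun_const] by (intro cSUP_upper2[where x="(p,t)"]) auto
  qed
  have max: "?S (\<lambda>z. max (\<phi> z) (\<psi> z)) = max (?S \<phi>) (?S \<psi>)"
    if "\<phi> \<in> Cfun Z" "\<psi> \<in> Cfun Z" for \<phi> \<psi>
  proof -
    have "max (?S \<phi>) (?S \<psi>) = (SUP w\<in>W. max ((\<lambda>(p,t). min (\<phi> p) t) w) ((\<lambda>(p,t). min (\<psi> p) t) w))"
      using SUP_sup_distrib[OF ne bdd[OF that(1)] bdd[OF that(2)]] by (simp add: sup_max)
    then show ?thesis by (simp add: case_prod_beta min_max_distrib1)
  qed
  have min: "?S (\<lambda>z. min c (\<phi> z)) = min c (?S \<phi>)" if "\<phi> \<in> Cfun Z" for c \<phi>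
    using min_Sup_real[of "(\<lambda>(p,t). min (\<phi> p) t) ` W" c] ne bdd[OF that]
    by (simp add: image_image case_prod_beta min.assoc)
  show ?thesis
    unfolding Jset_def maxmin_measure_def
  proof (intro CollectI conjI ballI allI impI)
    show "supmin Z W \<in> extensional (Cfun Z)" by (simp add: supmin_def)
    show "supmin Z W (\<lambda>_. c) = c" for c using const by (simp add: val)
    fix \<phi> assume \<phi>: "\<phi> \<in> Cfun Z"
    show "supmin Z W (\<lambda>z. min c (\<phi> z)) = min c (supmin Z W \<phi>)" for c
      using min[OF \<phi>] by (simp add: val \<phi> Cfun_min)
    fix \<psi> assume \<psi>: "\<psi> \<in> Cfun Z"
    show "supmin Z W (\<lambda>z. max (\<phi> z) (\<psi> z)) = max (supmin Z W \<phi>) (supmin Z W \<psi>)"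
      using max[OF \<phi> \<psi>] by (simp add: val \<phi> \<psi> Cfun_max)
    assume "\<forall>z\<in>topspace Z. \<phi> z = \<psi> z"
    then show "supmin Z W \<phi> = supmin Z W \<psi>"
      using W by (simp add: val \<phi> \<psi>) (intro SUP_cong; force)
  qed
qed

lemma supmin_in_Jsub:
  assumes Z: "compact_space Z" and A: "closedin Z A" and W: "fst ` W \<subseteq> A"
    and unbounded: "\<And>c. \<exists>p t. (p,t) \<in> W \<and> c \<le> t"
  shows "supmin Z W \<in> Jsub Z A"
proof -
  have "compact_space (subtopology Z A)"
    using A Z by (simp add: closedin_compact_space compact_space_subtopology)
  moreover have "fst ` W \<subseteq> topspace (subtopology Z A)" using W closedin_subset[OF A] by auto
  ultimately have J: "supmin (subtopology Z A) W \<in> Jset (subtopology Z A)"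
    using supmin_in_Jset unbounded by blast
  have "Jmap Z id (supmin (subtopology Z A) W) = supmin Z W"
    by (rule ext) (auto simp: Jmap_def supmin_def Cfun_def continuous_map_from_subtopology)
  then show ?thesis using J unfolding Jsub_def by (metis image_eqI)
qed

lemma supmin_image:
  assumes "continuous_map Z T e" "\<phi> \<in> Cfun T"
  shows "supmin T ((\<lambda>(p,t). (e p, t)) ` W) \<phi> = supmin Z W (\<phi> \<circ> e)"
proof -
  have "\<phi> \<circ> e \<in> Cfun Z" using assms by (simp add: Cfun_def continuous_map_compose)
  then show ?thesis using assms(2) by (simp add: supmin_def image_image case_prod_beta)
qed

lemma maxmin_milyutin_supmin:
  assumes Z: "compact_space Z" and X: "t1_space X"
    and f: "continuous_map Z X f" "f ` topspace Z = topspace X"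
    and W: "\<And>x. x \<in> topspace X \<Longrightarrow> fst ` W x \<subseteq> {z \<in> topspace Z. f z = x}"
    and unbounded: "\<And>x c. x \<in> topspace X \<Longrightarrow> \<exists>p t. (p,t) \<in> W x \<and> c \<le> t"
    and cont: "\<And>\<phi>. \<phi> \<in> Cfun Z \<Longrightarrow> continuous_map X euclideanreal (\<lambda>x. supmin Z (W x) \<phi>)"
  shows "maxmin_milyutin Z X f"
  unfolding maxmin_milyutin_def
proof (intro conjI exI[of _ "\<lambda>x. supmin Z (W x)"] ballI)
  show "continuous_map Z X f" "f ` topspace Z = topspace X" by (fact f)+
  fix x assume x: "x \<in> topspace X"
  have "closedin X {x}" using X x by (simp add: t1_space_closedin_singleton)
  then have "closedin Z {z \<in> topspace Z. f z = x}"
    using closedin_continuous_map_preimage[OF f(1)] by fastforce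
  then show "supmin Z (W x) \<in> Jsub Z {z \<in> topspace Z. f z = x}"
    using supmin_in_Jsub[OF Z _ W unbounded] x by blast
next
  have "supmin Z (W x) \<in> Jset Z" if "x \<in> topspace X" for x
    using supmin_in_Jset[OF Z _ unbounded] W that by blast
  moreover have "(\<lambda>x. supmin Z (W x)) ` topspace X \<subseteq> extensional (Cfun Z)"
    by (auto simp: supmin_def)
  ultimately show "continuous_map X (Jtop Z) (\<lambda>x. supmin Z (W x))"
    unfolding Jtop_def continuous_map_in_subtopology continuous_map_componentwise
    using cont by auto
qed

lemma zero_dimensional_iff_dim_le_0: "zero_dimensional X \<longleftrightarrow> X dim_le 0"
  by (simp add: zero_dimensional_def dimension_le_0_neighbourhood_base_of_clopen)

lemma continuous_map_euclideanreal_iff: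
  "continuous_map X euclideanreal f \<longleftrightarrow>
     (\<forall>x\<in>topspace X. \<forall>\<epsilon>>0. \<exists>U. openin X U \<and> x \<in> U \<and> (\<forall>y\<in>U. \<bar>f y - f x\<bar> < \<epsilon>))"
  using Met_TC.continuous_map_to_metric[of X f] by (simp add: dist_real_def abs_minus_commute)

lemma openin_finite_Ball:
  assumes "finite F" "\<And>i. i \<in> F \<Longrightarrow> openin X {x \<in> topspace X. P i x}"
  shows "openin X {x \<in> topspace X. \<forall>i\<in>F. P i x}"
proof -
  have "{x \<in> topspace X. \<forall>i\<in>F. P i x} = topspace X \<inter> \<Inter> ((\<lambda>i. {x \<in> topspace X. P i x}) ` F)"
    by auto
  then show ?thesis using assms by (auto intro!: openin_Int_Inter)
qed

lemma closedin_Ball: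
  assumes "\<And>i. i \<in> K \<Longrightarrow> closedin X {x \<in> topspace X. P i x}"
  shows "closedin X {x \<in> topspace X. \<forall>i\<in>K. P i x}"
proof -
  have "{x \<in> topspace X. \<forall>i\<in>K. P i x} = topspace X \<inter> \<Inter> ((\<lambda>i. {x \<in> topspace X. P i x}) ` K)"
    by auto
  then show ?thesis using assms by (cases "K = {}") (auto intro!: closedin_Int closedin_Inter)
qed

lemma homeomorphic_maps_pullback_inv_into:
  assumes inj: "inj_on e (topspace Z)"
  defines "d \<equiv> inv_into (topspace Z) e"
  shows "homeomorphic_maps Z (pullback_topology (e ` topspace Z) d Z) e d"
proof -
  let ?T = "pullback_topology (e ` topspace Z) d Z"
  have de: "d (e z) = z" if "z \<in> topspace Z" for z using inj that by (simp add: d_def)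
  have "topspace ?T = e ` topspace Z"
    unfolding topspace_pullback_topology using de by auto
  moreover have "continuous_map ?T Z d"
    using continuous_map_pullback[OF continuous_map_id] by simp
  moreover have "continuous_map Z ?T e"
  proof (rule continuous_map_pullback')
    show "continuous_map Z Z (d \<circ> e)"
      by (rule continuous_map_eq[OF continuous_map_id]) (simp add: de)
  qed auto
  ultimately show ?thesis
    unfolding homeomorphic_maps_def using de inj by (auto simp: d_def f_inv_into_f)
qed

section \<open>The digit cube\<close>

definition digit_cube :: "'i set \<Rightarrow> ('i \<times> nat \<Rightarrow> nat) topology" where
  "digit_cube I = product_topology (\<lambda>_. discrete_topology {0,1,2}) (I \<times> UNIV)"

definition digit_row :: "('i \<times> nat \<Rightarrow> nat) \<Rightarrow> 'i \<Rightarrow> nat \<Rightarrow> nat" where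
  "digit_row p i = (\<lambda>n. p (i,n))"

lemma topspace_digit_cube: "topspace (digit_cube I) = PiE (I \<times> UNIV) (\<lambda>_. {0,1,2})"
  by (simp add: digit_cube_def)

lemma compact_space_digit_cube: "compact_space (digit_cube I)"
  by (simp add: digit_cube_def compact_space_product_topology compact_space_discrete_topology)

lemma Hausdorff_space_digit_cube: "Hausdorff_space (digit_cube I)"
  by (simp add: digit_cube_def Hausdorff_space_product_topology)

lemma digit_cube_dim_le_0: "digit_cube I dim_le 0"
  unfolding dimension_le_0_neighbourhood_base_of_clopen neighbourhood_base_of
proof (intro allI impI)
  fix W p assume "openin (digit_cube I) W \<and> p \<in> W"
  then obtain B where B: "p \<in> PiE (I \<times> UNIV) B" "\<forall>m. openin (discrete_topology {0,1,2::nat}) (B m)"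
     "finite {m. B m \<noteq> topspace (discrete_topology {0,1,2::nat})}" "PiE (I \<times> UNIV) B \<subseteq> W"
    using product_topology_open_contains_basis[of "\<lambda>_. discrete_topology {0,1,2::nat}" "I \<times> UNIV" W p]
    unfolding digit_cube_def by auto
  have "openin (digit_cube I) (PiE (I \<times> UNIV) B)"
    unfolding digit_cube_def by (rule product_topology_basis) (use B in auto)
  moreover have "closedin (digit_cube I) (PiE (I \<times> UNIV) B)"
    unfolding digit_cube_def closedin_product_topology using B(2) by simp
  ultimately show "\<exists>U V. openin (digit_cube I) U \<and> (closedin (digit_cube I) V \<and> openin (digit_cube I) V)
      \<and> p \<in> U \<and> U \<subseteq> V \<and> V \<subseteq> W"
    using B(1,4) by blast
qed

lemma le_2_in_digits: "(d::nat) \<le> 2 \<Longrightarrow> d \<in> {0,1,2}"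
  by auto

lemma digit_cube_le_2: "p \<in> topspace (digit_cube I) \<Longrightarrow> i \<in> I \<Longrightarrow> p (i,n) \<le> 2"
  unfolding topspace_digit_cube by (auto dest: PiE_mem[where x="(i,n)"])

lemma digit_seq_digit_row: "p \<in> topspace (digit_cube I) \<Longrightarrow> i \<in> I \<Longrightarrow> digit_seq (digit_row p i)"
  by (simp add: digit_seq_def digit_row_def digit_cube_le_2)

lemma openin_digit_cube_cylinder:
  assumes p: "p \<in> topspace (digit_cube I)" and F: "finite F" "F \<subseteq> I \<times> UNIV"
  shows "openin (digit_cube I) {q \<in> topspace (digit_cube I). \<forall>m\<in>F. q m = p m}"
proof (rule openin_finite_Ball[OF F(1)])
  fix m assume "m \<in> F"
  then have m: "m \<in> I \<times> UNIV" using F(2) by blast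
  then have "p m \<in> {0,1,2}" using p unfolding topspace_digit_cube by (rule PiE_mem[rotated])
  then have "openin (discrete_topology {0,1,2}) {p m}" by simp
  from openin_continuous_map_preimage[OF continuous_map_product_projection[OF m] this]
  show "openin (digit_cube I) {q \<in> topspace (digit_cube I). q m = p m}"
    by (simp add: digit_cube_def)
qed

lemma continuous_map_digit_cube_tail:
  assumes "i \<in> I"
  shows "continuous_map (digit_cube I) euclideanreal (\<lambda>p. digits_value (\<lambda>n. p (i, n+j)))"
  unfolding continuous_map_euclideanreal_iff
proof (intro ballI allI impI)
  fix p and \<epsilon> :: real assume p: "p \<in> topspace (digit_cube I)" and "\<epsilon> > 0"
  obtain k where k: "(1/2::real)^k < \<epsilon>" using real_arch_pow_inv[OF \<open>\<epsilon> > 0\<close>, of "1/2"] by auto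
  let ?F = "(\<lambda>n. (i, n+j)) ` {..<k}"
  have "finite ?F" "?F \<subseteq> I \<times> UNIV" using assms by auto
  moreover have "\<bar>digits_value (\<lambda>n. q (i, n+j)) - digits_value (\<lambda>n. p (i, n+j))\<bar> < \<epsilon>"
    if "q \<in> topspace (digit_cube I)" "\<forall>m\<in>?F. q m = p m" for q
  proof -
    have "digit_seq (\<lambda>n. digit_row q i (n+j))" "digit_seq (\<lambda>n. digit_row p i (n+j))"
      using digit_seq_shift[OF digit_seq_digit_row[OF that(1) assms]]
        digit_seq_shift[OF digit_seq_digit_row[OF p assms]] .
    moreover have "digit_row q i (n+j) = digit_row p i (n+j)" if "n < k" for n
      using \<open>\<forall>m\<in>?F. q m = p m\<close> that by (simp add: digit_row_def)
    ultimately have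
      "\<bar>digits_value (\<lambda>n. digit_row q i (n+j)) - digits_value (\<lambda>n. digit_row p i (n+j))\<bar> \<le> 1/2^k"
      by (rule digits_value_close)
    then show ?thesis using k by (simp add: digit_row_def power_one_over)
  qed
  ultimately show "\<exists>U. openin (digit_cube I) U \<and> p \<in> U \<and>
      (\<forall>q\<in>U. \<bar>digits_value (\<lambda>n. q (i, n+j)) - digits_value (\<lambda>n. p (i, n+j))\<bar> < \<epsilon>)"
    using openin_digit_cube_cylinder[OF p \<open>finite ?F\<close> \<open>?F \<subseteq> I \<times> UNIV\<close>] p
    by (intro exI[of _ "{q \<in> topspace (digit_cube I). \<forall>m\<in>?F. q m = p m}"] conjI) simp_all
qed

lemma continuous_map_digit_cube_row:
  "i \<in> I \<Longrightarrow> continuous_map (digit_cube I) euclideanreal (\<lambda>p. digits_value (digit_row p i))"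
  using continuous_map_digit_cube_tail[of i I 0] by (simp add: digit_row_def)

lemma digit_cube_cylinder_subset:
  assumes U: "openin (digit_cube I) U" and p: "p \<in> U"
  obtains F k where "finite F" "F \<subseteq> I"
    "{q \<in> topspace (digit_cube I). \<forall>i\<in>F. \<forall>n<k. q (i,n) = p (i,n)} \<subseteq> U"
proof -
  obtain B where B: "p \<in> PiE (I \<times> UNIV) B" "\<forall>m. openin (discrete_topology {0,1,2::nat}) (B m)"
     "finite {m. B m \<noteq> topspace (discrete_topology {0,1,2::nat})}" "PiE (I \<times> UNIV) B \<subseteq> U"
    using product_topology_open_contains_basis[of "\<lambda>_. discrete_topology {0,1,2::nat}" "I \<times> UNIV" U p]
      U p unfolding digit_cube_def by auto
  define F0 where "F0 = {m. B m \<noteq> {0,1,2}}"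
  have "finite F0" using B(3) by (simp add: F0_def)
  define k where "k = Suc (Max (snd ` F0))"
  have k: "snd m < k" if "m \<in> F0" for m
    using \<open>finite F0\<close> that by (simp add: k_def le_imp_less_Suc)
  define F where "F = fst ` (F0 \<inter> (I \<times> UNIV))"
  show ?thesis
  proof
    show "finite F" using \<open>finite F0\<close> by (simp add: F_def)
    show "F \<subseteq> I" by (auto simp: F_def)
    show "{q \<in> topspace (digit_cube I). \<forall>i\<in>F. \<forall>n<k. q (i,n) = p (i,n)} \<subseteq> U"
    proof (intro subsetI, elim CollectE conjE)
      fix q assume q: "q \<in> topspace (digit_cube I)" and agree: "\<forall>i\<in>F. \<forall>n<k. q (i,n) = p (i,n)"
      have "q m \<in> B m" if m: "m \<in> I \<times> UNIV" for m
      proof (cases "m \<in> F0")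
        case True
        then have "fst m \<in> F" "snd m < k" using m k by (auto simp: F_def)
        then have "q m = p m" using agree by (metis prod.collapse)
        then show ?thesis using B(1) m by (simp add: PiE_mem)
      next
        case False
        then have "B m = {0,1,2}" by (simp add: F0_def)
        moreover have "q m \<in> {0,1,2}" using q m unfolding topspace_digit_cube by (rule PiE_mem)
        ultimately show ?thesis by simp
      qed
      moreover have "q \<in> extensional (I \<times> UNIV)" using q by (simp add: topspace_digit_cube PiE_iff)
      ultimately have "q \<in> PiE (I \<times> UNIV) B" by (simp add: PiE_iff)
      then show "q \<in> U" using B(4) by blast
    qed
  qed
qed

section \<open>Coding a compact space by digit sequences\<close>

definition level :: "real \<Rightarrow> real" where
  "level t = 1 / (4 + 4 * exp (- t))"

lemma level_pos: "0 < level t"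
  unfolding level_def by (simp add: add_pos_pos)

lemma level_less_quarter: "level t < 1/4"
proof -
  have "0 < 4 + 4 * exp (- t)" using exp_gt_zero[of "-t"] by linarith
  then show ?thesis unfolding level_def by (simp add: divide_simps)
qed

lemma level_strict_mono: "s < t \<Longrightarrow> level s < level t"
  unfolding level_def by (simp add: divide_simps add_pos_pos)

locale cube_embedding =
  fixes X :: "'a topology" and I :: "'i set" and u :: "'i \<Rightarrow> 'a \<Rightarrow> real"
  assumes compact: "compact_space X" and Hausdorff: "Hausdorff_space X"
    and continuous: "\<And>i. i \<in> I \<Longrightarrow> continuous_map X euclideanreal (u i)"
    and range: "\<And>i x. i \<in> I \<Longrightarrow> x \<in> topspace X \<Longrightarrow> 1/4 \<le> u i x \<and> u i x \<le> 3/4"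
    and separating: "\<And>x y. x \<in> topspace X \<Longrightarrow> y \<in> topspace X \<Longrightarrow> x \<noteq> y \<Longrightarrow> \<exists>i\<in>I. u i x \<noteq> u i y"
begin

definition encodes :: "('i \<times> nat \<Rightarrow> nat) \<Rightarrow> 'a \<Rightarrow> bool" where
  "encodes p x \<longleftrightarrow> x \<in> topspace X \<and> (\<forall>i\<in>I. digits_value (digit_row p i) = u i x)"

definition codes :: "('i \<times> nat \<Rightarrow> nat) set" where
  "codes = {p \<in> topspace (digit_cube I). \<exists>x. encodes p x}"

definition code_space :: "('i \<times> nat \<Rightarrow> nat) topology" where
  "code_space = subtopology (digit_cube I) codes"

definition decode :: "('i \<times> nat \<Rightarrow> nat) \<Rightarrow> 'a" where
  "decode p = (THE x. encodes p x)"

lemma encodes_unique: "encodes p x \<Longrightarrow> encodes p y \<Longrightarrow> x = y"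
  unfolding encodes_def by (metis separating)

lemma decode_eq: "encodes p x \<Longrightarrow> decode p = x"
  unfolding decode_def by (blast intro: the_equality encodes_unique)

lemma encodes_decode: "p \<in> codes \<Longrightarrow> encodes p (decode p)"
  unfolding codes_def using decode_eq by blast

lemma codes_subset: "codes \<subseteq> topspace (digit_cube I)"
  unfolding codes_def by blast

lemma topspace_code_space: "topspace code_space = codes"
  unfolding code_space_def using codes_subset by auto

lemma decode_in_topspace: "p \<in> codes \<Longrightarrow> decode p \<in> topspace X"
  using encodes_decode encodes_def by blast

text \<open>The set in question is the preimage of the compact set \<open>u ` K \<subseteq> \<real>\<^sup>I\<close> under the continuous map
  \<open>p \<mapsto> (digits_value (digit_row p i))\<^sub>i\<close>.\<close>
lemma closedin_codes_of:
  assumes K: "closedin X K"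
  shows "closedin (digit_cube I) {p \<in> topspace (digit_cube I). \<exists>x\<in>K. encodes p x}"
proof -
  define V where "V p = restrict (\<lambda>i. digits_value (digit_row p i)) I" for p :: "'i \<times> nat \<Rightarrow> nat"
  define U where "U x = restrict (\<lambda>i. u i x) I" for x
  have "continuous_map (digit_cube I) euclideanreal (\<lambda>p. V p i)" if "i \<in> I" for i
    using continuous_map_digit_cube_row[OF that] that by (simp add: V_def)
  then have cV: "continuous_map (digit_cube I) (product_topology (\<lambda>_. euclideanreal) I) V"
    unfolding continuous_map_componentwise by (auto simp: V_def)
  have "continuous_map X euclideanreal (\<lambda>x. U x i)" if "i \<in> I" for i
    using continuous[OF that] that by (simp add: U_def)
  then have "continuous_map X (product_topology (\<lambda>_. euclideanreal) I) U"
    unfolding continuous_map_componentwise by (auto simp: U_def)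
  then have "closedin (product_topology (\<lambda>_. euclideanreal) I) (U ` K)"
    using closedin_compact_space[OF compact K]
    by (intro compactin_imp_closedin image_compactin) (auto simp: Hausdorff_space_product_topology)
  moreover have "encodes p x \<longleftrightarrow> x \<in> topspace X \<and> V p = U x" for p x
  proof -
    have "V p = U x \<longleftrightarrow> (\<forall>i\<in>I. digits_value (digit_row p i) = u i x)"
      unfolding V_def U_def by (metis (mono_tags, lifting) restrict_apply' restrict_ext)
    then show ?thesis by (simp add: encodes_def)
  qed
  then have "{p \<in> topspace (digit_cube I). \<exists>x\<in>K. encodes p x} =
      {p \<in> topspace (digit_cube I). V p \<in> U ` K}"
    using closedin_subset[OF K] by auto
  ultimately show ?thesis by (simp add: closedin_continuous_map_preimage[OF cV])
qed

lemma closedin_codes: "closedin (digit_cube I) codes"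
proof -
  have "codes = {p \<in> topspace (digit_cube I). \<exists>x\<in>topspace X. encodes p x}"
    unfolding codes_def encodes_def by blast
  then show ?thesis using closedin_codes_of[OF closedin_topspace] by simp
qed

lemma compact_space_code_space: "compact_space code_space"
  unfolding code_space_def
  using closedin_compact_space[OF compact_space_digit_cube closedin_codes]
  by (rule compact_space_subtopology)

lemma Hausdorff_space_code_space: "Hausdorff_space code_space"
  unfolding code_space_def using Hausdorff_space_digit_cube by (rule Hausdorff_space_subtopology)

lemma code_space_dim_le_0: "code_space dim_le 0"
  unfolding code_space_def using digit_cube_dim_le_0 by (rule dimension_le_subtopology)

lemma continuous_map_decode: "continuous_map code_space X decode"
  unfolding continuous_map_closedin
proof (intro conjI allI impI)
  show "decode \<in> topspace code_space \<rightarrow> topspace X"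
    by (simp add: topspace_code_space decode_in_topspace)
  fix C assume C: "closedin X C"
  have "{p \<in> topspace code_space. decode p \<in> C} =
      {p \<in> topspace (digit_cube I). \<exists>x\<in>C. encodes p x} \<inter> codes"
    using encodes_decode decode_eq codes_subset by (auto simp: topspace_code_space)
  then show "closedin code_space {p \<in> topspace code_space. decode p \<in> C}"
    unfolding code_space_def closedin_subtopology using closedin_codes_of[OF C] by blast
qed

lemma code_of_rows:
  assumes x: "x \<in> topspace X"
    and S: "\<And>i. i \<in> I \<Longrightarrow> digit_seq (S i) \<and> digits_value (S i) = u i x"
  defines "p \<equiv> restrict (\<lambda>(i,n). S i n) (I \<times> UNIV)"
  shows "p \<in> codes" "decode p = x" "\<forall>i\<in>I. digit_row p i = S i"
proof -
  show rows: "\<forall>i\<in>I. digit_row p i = S i" by (auto simp: digit_row_def p_def)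
  have "p m \<in> {0,1,2}" if "m \<in> I \<times> UNIV" for m
  proof -
    have "p m \<le> 2" using S[of "fst m"] that by (auto simp: p_def digit_seq_def case_prod_beta)
    then show ?thesis by (rule le_2_in_digits)
  qed
  then have "p \<in> topspace (digit_cube I)"
    by (simp add: topspace_digit_cube PiE_iff p_def)
  moreover have "encodes p x" using x S rows by (simp add: encodes_def)
  ultimately show "p \<in> codes" "decode p = x" by (auto simp: codes_def decode_eq)
qed

definition greedy_code :: "'a \<Rightarrow> 'i \<times> nat \<Rightarrow> nat" where
  "greedy_code x = restrict (\<lambda>(i,n). greedy_digits (u i x) n) (I \<times> UNIV)"

lemma greedy_code:
  assumes x: "x \<in> topspace X"
  shows "greedy_code x \<in> codes" "decode (greedy_code x) = x"
    "\<And>i. i \<in> I \<Longrightarrow> tails_within (1/4) (digit_row (greedy_code x) i)"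
proof -
  have S: "digit_seq (greedy_digits (u i x)) \<and> digits_value (greedy_digits (u i x)) = u i x"
    if "i \<in> I" for i
    using range[OF that x] digit_seq_greedy_digits digits_value_greedy_digits by simp
  note code = code_of_rows[where S="\<lambda>i. greedy_digits (u i x)", OF x S, folded greedy_code_def]
  show "greedy_code x \<in> codes" using code(1) .
  show "decode (greedy_code x) = x" using code(2) .
  show "tails_within (1/4) (digit_row (greedy_code x) i)" if "i \<in> I" for i
    using range[OF that x] code(3) that by (simp add: tails_within_greedy_digits)
qed

lemma decode_surjective: "decode ` codes = topspace X"
proof
  show "decode ` codes \<subseteq> topspace X" using decode_in_topspace by blast
  show "topspace X \<subseteq> decode ` codes" using greedy_code(1,2) by (metis image_eqI subsetI)
qed

text \<open>The larger t, the fewer codes qualify; as \<open>level t < 1/4\<close>, greedy codes qualify for all t.\<close>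
definition good_codes :: "'a \<Rightarrow> (('i \<times> nat \<Rightarrow> nat) \<times> real) set" where
  "good_codes x = {(p,t). p \<in> codes \<and> decode p = x \<and>
      (\<exists>c > level t. \<forall>i\<in>I. tails_within c (digit_row p i))}"

lemma good_codes_unbounded: "x \<in> topspace X \<Longrightarrow> \<exists>p t. (p,t) \<in> good_codes x \<and> c \<le> t"
  using greedy_code[of x] level_less_quarter[of c] unfolding good_codes_def by blast

lemma fst_good_codes: "fst ` good_codes x \<subseteq> {p \<in> topspace code_space. decode p = x}"
  unfolding good_codes_def topspace_code_space by auto

lemma bdd_above_good_codes:
  assumes "\<phi> \<in> Cfun code_space" shows "bdd_above ((\<lambda>(p,t). min (\<phi> p) t) ` good_codes x)"
proof (rule bdd_above_supmin[OF compact_space_code_space assms])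
  show "fst ` good_codes x \<subseteq> topspace code_space" using fst_good_codes by blast
qed

lemma good_codes_nonempty: "x \<in> topspace X \<Longrightarrow> good_codes x \<noteq> {}"
  using good_codes_unbounded by blast

lemma splice_code:
  assumes p0: "p0 \<in> codes" "\<forall>i\<in>I. tails_within c (digit_row p0 i)"
    and \<eta>: "0 < \<eta>" "\<eta> < c" "c \<le> 1/4" and F: "F \<subseteq> I"
    and x: "x \<in> topspace X" "\<forall>i\<in>F. \<bar>u i x - u i (decode p0)\<bar> \<le> \<eta> / 2^k"
  obtains p where "p \<in> codes" "decode p = x" "\<forall>i\<in>I. tails_within (c - \<eta>) (digit_row p i)"
    "\<forall>i\<in>F. \<forall>n<k. p (i,n) = p0 (i,n)"
proof -
  have "\<exists>s. digit_seq s \<and> digits_value s = u i x \<and> tails_within (c - \<eta>) s \<and>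
      (i \<in> F \<longrightarrow> (\<forall>n<k. s n = p0 (i,n)))" if i: "i \<in> I" for i
  proof (cases "i \<in> F")
    case True
    have "digits_value (digit_row p0 i) = u i (decode p0)"
      using encodes_decode[OF p0(1)] i by (simp add: encodes_def)
    then have "\<bar>u i x - digits_value (digit_row p0 i)\<bar> \<le> \<eta> / 2^k" using x(2) True by simp
    with splice_digits[OF digit_seq_digit_row[OF subsetD[OF codes_subset p0(1)] i] _ \<eta>]
    obtain s where "digit_seq s" "\<forall>n<k. s n = digit_row p0 i n" "digits_value s = u i x"
      "tails_within (c - \<eta>) s"
      using p0(2) i by metis
    then show ?thesis by (auto simp: digit_row_def)
  next
    case False
    have "tails_within (1/4) (greedy_digits (u i x))"
      using range[OF i x(1)] by (simp add: tails_within_greedy_digits)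
    then have "tails_within (c - \<eta>) (greedy_digits (u i x))"
      by (rule tails_within_mono[rotated]) (use \<eta> in linarith)
    then show ?thesis
      using False range[OF i x(1)]
      by (intro exI[of _ "greedy_digits (u i x)"])
         (simp add: digit_seq_greedy_digits digits_value_greedy_digits)
  qed
  then obtain S where S: "\<forall>i\<in>I. digit_seq (S i) \<and> digits_value (S i) = u i x \<and>
      tails_within (c - \<eta>) (S i) \<and> (i \<in> F \<longrightarrow> (\<forall>n<k. S i n = p0 (i,n)))"
    by metis
  note code = code_of_rows[where S=S, OF x(1)]
  show ?thesis
  proof
    show "restrict (\<lambda>(i,n). S i n) (I \<times> UNIV) \<in> codes"
      "decode (restrict (\<lambda>(i,n). S i n) (I \<times> UNIV)) = x"
      using code S by blast+
    show "\<forall>i\<in>I. tails_within (c - \<eta>) (digit_row (restrict (\<lambda>(i,n). S i n) (I \<times> UNIV)) i)"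
      using code(3) S by simp
    show "\<forall>i\<in>F. \<forall>n<k. restrict (\<lambda>(i,n). S i n) (I \<times> UNIV) (i,n) = p0 (i,n)"
      using S F by auto
  qed
qed

lemma code_space_cylinder_nbhd:
  assumes \<phi>: "\<phi> \<in> Cfun code_space" and p0: "p0 \<in> codes" and a: "a < \<phi> p0"
  obtains F k where "finite F" "F \<subseteq> I"
    "\<And>q. q \<in> codes \<Longrightarrow> \<forall>i\<in>F. \<forall>n<k. q (i,n) = p0 (i,n) \<Longrightarrow> a < \<phi> q"
proof -
  have "openin code_space {q \<in> topspace code_space. \<phi> q \<in> {a<..}}"
    using \<phi> by (intro openin_continuous_map_preimage) (auto simp: Cfun_def)
  then have "openin code_space {q \<in> codes. a < \<phi> q}" by (simp add: topspace_code_space)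
  then obtain U where U: "openin (digit_cube I) U" "{q \<in> codes. a < \<phi> q} = U \<inter> codes"
    unfolding code_space_def openin_subtopology by blast
  have "p0 \<in> U" using U(2) p0 a by blast
  with U(1) obtain F k where F: "finite F" "F \<subseteq> I"
    and cyl: "{q \<in> topspace (digit_cube I). \<forall>i\<in>F. \<forall>n<k. q (i,n) = p0 (i,n)} \<subseteq> U"
    by (rule digit_cube_cylinder_subset)
  show ?thesis
  proof (rule that[OF F])
    fix q assume "q \<in> codes" "\<forall>i\<in>F. \<forall>n<k. q (i,n) = p0 (i,n)"
    then have "q \<in> U \<inter> codes" using cyl codes_subset by blast
    then show "a < \<phi> q" using U(2) by blast
  qed
qed

lemma openin_coordinate_ball:
  assumes "finite F" "F \<subseteq> I"
  shows "openin X {x \<in> topspace X. \<forall>i\<in>F. \<bar>u i x - u i x0\<bar> < r}"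
proof (rule openin_finite_Ball[OF assms(1)])
  fix i assume "i \<in> F"
  then have "continuous_map X euclideanreal (\<lambda>x. \<bar>u i x - u i x0\<bar>)"
    using continuous assms(2) by (intro continuous_map_real_abs continuous_map_diff) auto
  then show "openin X {x \<in> topspace X. \<bar>u i x - u i x0\<bar> < r}"
    using openin_continuous_map_preimage[of X euclideanreal _ "{..<r}"] by simp
qed

lemma good_codes_nearby:
  assumes \<phi>: "\<phi> \<in> Cfun code_space" and good: "(p0,t0) \<in> good_codes x0" and a: "a < \<phi> p0"
  obtains T where "openin X T" "x0 \<in> T" "\<And>x. x \<in> T \<Longrightarrow> \<exists>p. (p,t0) \<in> good_codes x \<and> a < \<phi> p"
proof -
  obtain c0 where p0: "p0 \<in> codes" "decode p0 = x0" "level t0 < c0"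
    "\<forall>i\<in>I. tails_within c0 (digit_row p0 i)"
    using good unfolding good_codes_def by auto
  define c where "c = min c0 (1/4)"
  define \<eta> where "\<eta> = (c - level t0) / 2"
  have c: "c \<le> 1/4" "\<forall>i\<in>I. tails_within c (digit_row p0 i)"
    using p0(4) tails_within_mono[of c c0] by (auto simp: c_def)
  have "level t0 < c" using p0(3) level_less_quarter[of t0] by (simp add: c_def)
  then have \<eta>: "0 < \<eta>" "\<eta> < c" "level t0 < c - \<eta>"
    using level_pos[of t0] unfolding \<eta>_def by (simp_all add: field_simps)
  obtain F k where F: "finite F" "F \<subseteq> I"
    and agree: "\<And>q. q \<in> codes \<Longrightarrow> \<forall>i\<in>F. \<forall>n<k. q (i,n) = p0 (i,n) \<Longrightarrow> a < \<phi> q"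
    using code_space_cylinder_nbhd[OF \<phi> p0(1) a] by blast
  show ?thesis
  proof
    show "openin X {x \<in> topspace X. \<forall>i\<in>F. \<bar>u i x - u i x0\<bar> < \<eta> / 2^k}"
      using F by (rule openin_coordinate_ball)
    show "x0 \<in> {x \<in> topspace X. \<forall>i\<in>F. \<bar>u i x - u i x0\<bar> < \<eta> / 2^k}"
      using p0(1,2) \<eta>(1) decode_in_topspace by auto
    fix x assume "x \<in> {x \<in> topspace X. \<forall>i\<in>F. \<bar>u i x - u i x0\<bar> < \<eta> / 2^k}"
    then have x: "x \<in> topspace X" "\<forall>i\<in>F. \<bar>u i x - u i (decode p0)\<bar> \<le> \<eta> / 2^k"
      using p0(2) by (auto simp: less_imp_le)
    obtain p where "p \<in> codes" "decode p = x" "\<forall>i\<in>I. tails_within (c - \<eta>) (digit_row p i)"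
      "\<forall>i\<in>F. \<forall>n<k. p (i,n) = p0 (i,n)"
      using splice_code[OF p0(1) c(2) \<eta>(1,2) c(1) F(2) x] .
    then show "\<exists>p. (p,t0) \<in> good_codes x \<and> a < \<phi> p"
      using \<eta>(3) agree by (auto simp: good_codes_def)
  qed
qed

lemma lower_semicontinuous_supmin:
  assumes \<phi>: "\<phi> \<in> Cfun code_space"
  shows "openin X {x \<in> topspace X. a < supmin code_space (good_codes x) \<phi>}"
proof (subst openin_subopen, intro ballI)
  let ?S = "\<lambda>x. SUP (p,t)\<in>good_codes x. min (\<phi> p) t"
  have S: "supmin code_space (good_codes x) \<phi> = ?S x" for x using \<phi> by (simp add: supmin_def)
  have less_S: "a < ?S x \<longleftrightarrow> (\<exists>(p,t)\<in>good_codes x. a < min (\<phi> p) t)" if "x \<in> topspace X" for x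
    using less_cSUP_iff[OF good_codes_nonempty[OF that] bdd_above_good_codes[OF \<phi>]]
    by (simp add: case_prod_beta)
  fix x0 assume "x0 \<in> {x \<in> topspace X. a < supmin code_space (good_codes x) \<phi>}"
  then obtain p0 t0 where "(p0,t0) \<in> good_codes x0" "a < \<phi> p0" "a < t0"
    using less_S by (auto simp: S)
  then obtain T where T: "openin X T" "x0 \<in> T" "\<And>x. x \<in> T \<Longrightarrow> \<exists>p. (p,t0) \<in> good_codes x \<and> a < \<phi> p"
    using good_codes_nearby[OF \<phi>] by metis
  have "T \<subseteq> {x \<in> topspace X. a < supmin code_space (good_codes x) \<phi>}"
  proof
    fix x assume "x \<in> T"
    moreover have "x \<in> topspace X" using openin_subset[OF T(1)] \<open>x \<in> T\<close> by blast
    ultimately show "x \<in> {x \<in> topspace X. a < supmin code_space (good_codes x) \<phi>}"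
      using T(3) \<open>a < t0\<close> less_S by (fastforce simp: S)
  qed
  then show "\<exists>T. openin X T \<and> x0 \<in> T \<and> T \<subseteq> {x \<in> topspace X. a < supmin code_space (good_codes x) \<phi>}"
    using T(1,2) by blast
qed

lemma closedin_digit_cube_tails_within:
  "closedin (digit_cube I) {p \<in> topspace (digit_cube I). \<forall>i\<in>I. tails_within c (digit_row p i)}"
proof -
  have "closedin (digit_cube I) {p \<in> topspace (digit_cube I).
      \<forall>m\<in>I \<times> UNIV. digits_value (\<lambda>n. p (fst m, n + snd m)) \<in> {c..1 - c}}"
  proof (rule closedin_Ball)
    fix m :: "'i \<times> nat" assume "m \<in> I \<times> UNIV"
    then have "fst m \<in> I" by auto
    moreover have "closedin euclideanreal {c..1 - c}" by (simp flip: closed_closedin)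
    ultimately show "closedin (digit_cube I) {p \<in> topspace (digit_cube I).
        digits_value (\<lambda>n. p (fst m, n + snd m)) \<in> {c..1 - c}}"
      by (rule closedin_continuous_map_preimage[OF continuous_map_digit_cube_tail])
  qed
  moreover have "(\<forall>m\<in>I \<times> UNIV. digits_value (\<lambda>n. p (fst m, n + snd m)) \<in> {c..1 - c}) \<longleftrightarrow>
      (\<forall>i\<in>I. tails_within c (digit_row p i))" for p
    by (auto simp: tails_within_def digit_row_def)
  ultimately show ?thesis by simp
qed

definition level_codes :: "(('i \<times> nat \<Rightarrow> nat) \<Rightarrow> real) \<Rightarrow> real \<Rightarrow> ('i \<times> nat \<Rightarrow> nat) set" where
  "level_codes \<phi> b = {p \<in> codes. b \<le> \<phi> p \<and> (\<forall>i\<in>I. tails_within (level b) (digit_row p i))}"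

lemma closedin_level_codes:
  assumes \<phi>: "\<phi> \<in> Cfun code_space"
  shows "closedin code_space (level_codes \<phi> b)"
proof -
  have "closedin code_space {p \<in> topspace code_space. \<phi> p \<in> {b..}}"
    using \<phi> by (intro closedin_continuous_map_preimage) (auto simp: Cfun_def)
  moreover have "closedin code_space
      ({p \<in> topspace (digit_cube I). \<forall>i\<in>I. tails_within (level b) (digit_row p i)} \<inter> codes)"
    unfolding code_space_def closedin_subtopology using closedin_digit_cube_tails_within by blast
  moreover have "level_codes \<phi> b = {p \<in> topspace code_space. \<phi> p \<in> {b..}} \<inter>
      ({p \<in> topspace (digit_cube I). \<forall>i\<in>I. tails_within (level b) (digit_row p i)} \<inter> codes)"
    using codes_subset by (auto simp: level_codes_def topspace_code_space)
  ultimately show ?thesis by (simp add: closedin_Int)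
qed

lemma supmin_ge_below_level:
  assumes \<phi>: "\<phi> \<in> Cfun code_space" and p: "p \<in> level_codes \<phi> b" and "t < b"
  shows "t \<le> supmin code_space (good_codes (decode p)) \<phi>"
proof -
  have "(p, t) \<in> good_codes (decode p)"
    using p level_strict_mono[OF \<open>t < b\<close>] by (auto simp: good_codes_def level_codes_def)
  moreover have "min (\<phi> p) t = t" using p \<open>t < b\<close> by (simp add: level_codes_def)
  ultimately show ?thesis
    using bdd_above_good_codes[OF \<phi>] \<phi>
    by (simp add: supmin_def) (intro cSUP_upper2[where x="(p,t)"]; simp)
qed

lemma supmin_le_outside_level_codes:
  assumes \<phi>: "\<phi> \<in> Cfun code_space" and x: "x \<in> topspace X" "x \<notin> decode ` level_codes \<phi> b"
  shows "supmin code_space (good_codes x) \<phi> \<le> b"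
proof -
  have "(SUP (p,t)\<in>good_codes x. min (\<phi> p) t) \<le> b"
  proof (rule cSUP_least[OF good_codes_nonempty[OF x(1)]])
    fix w assume "w \<in> good_codes x"
    then obtain p t c where w: "w = (p,t)" "p \<in> codes" "decode p = x" "level t < c"
      "\<forall>i\<in>I. tails_within c (digit_row p i)"
      unfolding good_codes_def by blast
    show "(\<lambda>(p,t). min (\<phi> p) t) w \<le> b"
    proof (rule ccontr)
      assume "\<not> ?thesis"
      then have "b < \<phi> p" "b < t" using w(1) by auto
      moreover have "\<forall>i\<in>I. tails_within (level b) (digit_row p i)"
        using w(4,5) level_strict_mono[OF \<open>b < t\<close>] tails_within_mono[of "level b" c] by auto
      ultimately have "p \<in> level_codes \<phi> b" using w(2) by (simp add: level_codes_def)
      then show False using x w(3) by blast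
    qed
  qed
  then show ?thesis using \<phi> by (simp add: supmin_def)
qed

lemma upper_semicontinuous_supmin:
  assumes \<phi>: "\<phi> \<in> Cfun code_space"
  shows "openin X {x \<in> topspace X. supmin code_space (good_codes x) \<phi> < a}"
proof (subst openin_subopen, intro ballI)
  fix x0 assume "x0 \<in> {x \<in> topspace X. supmin code_space (good_codes x) \<phi> < a}"
  then have x0: "x0 \<in> topspace X" "supmin code_space (good_codes x0) \<phi> < a" by auto
  define b where "b = (supmin code_space (good_codes x0) \<phi> + a) / 2"
  let ?C = "decode ` level_codes \<phi> b"
  have "compactin code_space (level_codes \<phi> b)"
    using closedin_level_codes[OF \<phi>] compact_space_code_space by (simp add: closedin_compact_space)
  then have "closedin X ?C"
    using Hausdorff by (intro compactin_imp_closedin image_compactin[OF _ continuous_map_decode])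
  then have "openin X (topspace X - ?C)" by (simp add: openin_diff)
  moreover have "x0 \<notin> ?C"
    using supmin_ge_below_level[OF \<phi>, of _ b "(supmin code_space (good_codes x0) \<phi> + b) / 2"] x0(2)
    by (force simp: b_def)
  moreover have "supmin code_space (good_codes x) \<phi> < a" if "x \<in> topspace X - ?C" for x
    using supmin_le_outside_level_codes[OF \<phi>, of x b] that x0(2) by (simp add: b_def)
  ultimately show "\<exists>T. openin X T \<and> x0 \<in> T \<and> T \<subseteq> {x \<in> topspace X. supmin code_space (good_codes x) \<phi> < a}"
    using x0(1) by (intro exI[of _ "topspace X - ?C"]) auto
qed

lemma continuous_map_supmin_good_codes:
  "\<phi> \<in> Cfun code_space \<Longrightarrow> continuous_map X euclideanreal (\<lambda>x. supmin code_space (good_codes x) \<phi>)"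
  unfolding continuous_map_upper_lower_semicontinuous_lt
  using lower_semicontinuous_supmin upper_semicontinuous_supmin by blast

lemma maxmin_milyutin_copy:
  fixes e :: "('i \<times> nat \<Rightarrow> nat) \<Rightarrow> 'c"
  assumes inj: "inj_on e codes"
  shows "\<exists>(Z :: 'c topology) f. compact_space Z \<and> Hausdorff_space Z \<and> zero_dimensional Z \<and>
           maxmin_milyutin Z X f"
proof -
  define d where "d = inv_into codes e"
  define Z where "Z = pullback_topology (e ` codes) d code_space"
  have hm: "homeomorphic_maps code_space Z e d"
    using homeomorphic_maps_pullback_inv_into[of e code_space] inj
    by (simp add: Z_def d_def topspace_code_space)
  then have hs: "code_space homeomorphic_space Z" unfolding homeomorphic_space_def by blast
  have e: "continuous_map code_space Z e" and d: "continuous_map Z code_space d"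
    using hm unfolding homeomorphic_maps_def by auto
  have de: "d (e p) = p" if "p \<in> codes" for p using inj that by (simp add: d_def)
  have tZ: "topspace Z = e ` codes"
    unfolding Z_def topspace_pullback_topology topspace_code_space using de by auto
  have "maxmin_milyutin Z X (decode \<circ> d)"
  proof (rule maxmin_milyutin_supmin[where W="\<lambda>x. (\<lambda>(p,t). (e p, t)) ` good_codes x"])
    show "compact_space Z"
      using compact_space_code_space homeomorphic_compact_space[OF hs] by simp
    show "t1_space X" using Hausdorff by (rule Hausdorff_imp_t1_space)
    show "continuous_map Z X (decode \<circ> d)"
      using d continuous_map_decode by (rule continuous_map_compose)
    show "(decode \<circ> d) ` topspace Z = topspace X"
      using de decode_surjective by (simp add: tZ image_comp[symmetric] image_image)
    show "fst ` (\<lambda>(p,t). (e p, t)) ` good_codes x \<subseteq> {z \<in> topspace Z. (decode \<circ> d) z = x}" for x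
      using fst_good_codes[of x] de by (force simp: tZ topspace_code_space)
    show "\<exists>p t. (p,t) \<in> (\<lambda>(p,t). (e p, t)) ` good_codes x \<and> c \<le> t" if "x \<in> topspace X" for x c
      using good_codes_unbounded[OF that, of c] by force
    show "continuous_map X euclideanreal (\<lambda>x. supmin Z ((\<lambda>(p,t). (e p, t)) ` good_codes x) \<phi>)"
      if "\<phi> \<in> Cfun Z" for \<phi>
      using continuous_map_supmin_good_codes[of "\<phi> \<circ> e"] supmin_image[OF e that] that e
      by (simp add: Cfun_def continuous_map_compose)
  qed
  moreover have "compact_space Z" "Hausdorff_space Z" "zero_dimensional Z"
    using compact_space_code_space Hausdorff_space_code_space code_space_dim_le_0
      homeomorphic_compact_space[OF hs] homeomorphic_Hausdorff_space[OF hs]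
      homeomorphic_space_dimension_le[OF hs]
    by (simp_all add: zero_dimensional_iff_dim_le_0)
  ultimately show ?thesis by blast
qed

end

lemma finite_space_maxmin_milyutin:
  fixes X :: "'a topology"
  assumes "Hausdorff_space X" and fin: "finite (topspace X)"
  shows "\<exists>(Z :: 'a set set set topology) f.
           compact_space Z \<and> Hausdorff_space Z \<and> zero_dimensional Z \<and> maxmin_milyutin Z X f"
proof -
  define E :: "'a \<Rightarrow> 'a set set set" where "E x = {{{x}}}" for x
  have "inj E" unfolding E_def by (rule injI) simp
  then have FE: "inv_into (topspace X) E (E x) = x" if "x \<in> topspace X" for x
    using that by (simp add: inv_into_f_f inj_on_subset)
  define Z where "Z = discrete_topology (E ` topspace X)"
  have X: "X = discrete_topology (topspace X)"
    using finite_t1_space_imp_discrete_topology[OF refl fin Hausdorff_imp_t1_space[OF assms(1)]] .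
  have "maxmin_milyutin Z X (inv_into (topspace X) E)"
  proof (rule maxmin_milyutin_supmin[where W="\<lambda>x. {E x} \<times> UNIV"])
    show "t1_space X" using assms(1) by (rule Hausdorff_imp_t1_space)
    show "continuous_map Z X (inv_into (topspace X) E)" by (auto simp: Z_def FE)
    show "inv_into (topspace X) E ` topspace Z = topspace X" using FE by (force simp: Z_def)
    show "continuous_map X euclideanreal g" for g by (subst X) simp
  qed (auto simp: Z_def FE compact_space_discrete_topology fin)
  moreover have "compact_space Z" "Hausdorff_space Z" "zero_dimensional Z"
    using fin by (simp_all add: Z_def compact_space_discrete_topology zero_dimensional_iff_dim_le_0)
  ultimately show ?thesis by blast
qed

lemma separating_function:
  assumes "normal_space X" "t1_space X" "x \<in> topspace X" "y \<in> topspace X" "x \<noteq> y"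
  shows "\<exists>g. continuous_map X euclideanreal g \<and> (\<forall>z\<in>topspace X. 1/4 \<le> g z \<and> g z \<le> 3/4) \<and> g x \<noteq> g y"
proof -
  have "closedin X {x}" "closedin X {y}"
    using assms(2-4) by (simp_all add: t1_space_closedin_singleton)
  then obtain g where g: "continuous_map X (top_of_set {1/4..3/4::real}) g"
    "g ` {x} \<subseteq> {1/4}" "g ` {y} \<subseteq> {3/4}"
    using Urysohn_lemma[OF assms(1), of "{x}" "{y}" "1/4" "3/4"] assms(5) by auto
  then have "continuous_map X euclideanreal g" "\<forall>z\<in>topspace X. 1/4 \<le> g z \<and> g z \<le> 3/4"
    by (auto simp: continuous_map_in_subtopology)
  moreover have "g x \<noteq> g y" using g(2,3) by simp
  ultimately show ?thesis by blast
qed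

lemma cube_embedding_pairs:
  assumes compact: "compact_space X" and Hausdorff: "Hausdorff_space X"
  shows "\<exists>u. cube_embedding X {{x,y} | x y. x \<in> topspace X \<and> y \<in> topspace X \<and> x \<noteq> y} u"
proof -
  let ?I = "{{x,y} | x y. x \<in> topspace X \<and> y \<in> topspace X \<and> x \<noteq> y}"
  have normal: "normal_space X"
    using compact Hausdorff by (simp add: compact_Hausdorff_or_regular_imp_normal_space)
  have "\<exists>g. continuous_map X euclideanreal g \<and> (\<forall>z\<in>topspace X. 1/4 \<le> g z \<and> g z \<le> 3/4)
      \<and> (\<forall>x\<in>i. \<forall>y\<in>i. x \<noteq> y \<longrightarrow> g x \<noteq> g y)" if i: "i \<in> ?I" for i
  proof -
    obtain x y where xy: "i = {x,y}" "x \<in> topspace X" "y \<in> topspace X" "x \<noteq> y"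
      using i by blast
    obtain g where "continuous_map X euclideanreal g" "\<forall>z\<in>topspace X. 1/4 \<le> g z \<and> g z \<le> 3/4"
      "g x \<noteq> g y"
      using separating_function[OF normal Hausdorff_imp_t1_space[OF Hausdorff] xy(2-4)] by blast
    then show ?thesis by (intro exI[of _ g]) (auto simp: xy(1))
  qed
  then have "\<forall>i\<in>?I. \<exists>g. continuous_map X euclideanreal g \<and> (\<forall>z\<in>topspace X. 1/4 \<le> g z \<and> g z \<le> 3/4)
      \<and> (\<forall>x\<in>i. \<forall>y\<in>i. x \<noteq> y \<longrightarrow> g x \<noteq> g y)" by blast
  from bchoice[OF this] obtain u where u': "\<forall>i\<in>?I. continuous_map X euclideanreal (u i) \<and>
      (\<forall>z\<in>topspace X. 1/4 \<le> u i z \<and> u i z \<le> 3/4) \<and> (\<forall>x\<in>i. \<forall>y\<in>i. x \<noteq> y \<longrightarrow> u i x \<noteq> u i y)" ..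
  note u = u'[rule_format]
  have "cube_embedding X ?I u"
  proof
    show "compact_space X" "Hausdorff_space X" by (fact compact Hausdorff)+
    show "continuous_map X euclideanreal (u i)" if "i \<in> ?I" for i using u[OF that] by blast
    show "1/4 \<le> u i x \<and> u i x \<le> 3/4" if "i \<in> ?I" "x \<in> topspace X" for i x
      using u[OF that(1)] that(2) by blast
    show "\<exists>i\<in>?I. u i x \<noteq> u i y" if "x \<in> topspace X" "y \<in> topspace X" "x \<noteq> y" for x y
    proof
      show "{x,y} \<in> ?I" using that by blast
      show "u {x,y} x \<noteq> u {x,y} y" using u[OF \<open>{x,y} \<in> ?I\<close>] that(3) by blast
    qed
  qed
  then show ?thesis by blast
qed

lemma mult_3_add_digit_inject:
  "3 * n + a = 3 * n' + b \<Longrightarrow> a \<le> 2 \<Longrightarrow> b \<le> 2 \<Longrightarrow> n = n' \<and> a = (b::nat)"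
  by presburger

text \<open>Coding digit arrays indexed by two-element sets i as sets of sets: the entry d at (i,n)
  becomes \<open>{i, M (3n + d)}\<close>, where \<open>M k\<close> is a (k+3)-element set, so it cannot be confused with i.\<close>
lemma inj_on_pair_code:
  fixes e :: "nat \<Rightarrow> 'a" and I :: "'a set set"
  assumes e: "inj e" and I: "\<And>i. i \<in> I \<Longrightarrow> card i = 2"
  shows "inj_on (\<lambda>p. {{i, e ` {..3*n + p (i,n) + 2}} | i n. i \<in> I}) (PiE (I \<times> UNIV) (\<lambda>_. {0,1,2}))"
proof (rule inj_onI)
  let ?M = "\<lambda>k. e ` {..k + 2}"
  have card_M: "card (?M k) = k + 3" for k using e by (simp add: card_image inj_on_subset)
  fix p q assume p: "p \<in> PiE (I \<times> UNIV) (\<lambda>_. {0,1,2::nat})"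
    and q: "q \<in> PiE (I \<times> UNIV) (\<lambda>_. {0,1,2::nat})"
    and eq: "{{i, ?M (3*n + p (i,n))} | i n. i \<in> I} = {{i, ?M (3*n + q (i,n))} | i n. i \<in> I}"
  show "p = q"
  proof
    fix m
    show "p m = q m"
    proof (cases "m \<in> I \<times> UNIV")
      case True
      then obtain i n where m: "m = (i,n)" "i \<in> I" by auto
      then have "{i, ?M (3*n + p (i,n))} \<in> {{i, ?M (3*n + p (i,n))} | i n. i \<in> I}" by blast
      then have "{i, ?M (3*n + p (i,n))} \<in> {{i, ?M (3*n + q (i,n))} | i n. i \<in> I}"
        by (simp only: eq)
      then obtain i' n' where i': "{i, ?M (3*n + p (i,n))} = {i', ?M (3*n' + q (i',n'))}"
        by blast
      have "i \<noteq> ?M k" for k using I[OF m(2)] card_M[of k] by auto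
      then have "i = i'" "?M (3*n + p (i,n)) = ?M (3*n' + q (i,n'))"
        using i' by (auto simp: doubleton_eq_iff)
      then have "card (?M (3*n + p (i,n))) = card (?M (3*n' + q (i,n')))" by simp
      then have "3*n + p (i,n) = 3*n' + q (i,n')" by (simp only: card_M)
      moreover have "p (i,n) \<le> 2" "q (i,n') \<le> 2"
        using PiE_mem[OF p, of "(i,n)"] PiE_mem[OF q, of "(i,n')"] m(2) by auto
      ultimately have "n = n' \<and> p (i,n) = q (i,n')" by (rule mult_3_add_digit_inject)
      then show ?thesis using m(1) by (elim conjE) simp
    next
      case False
      then show ?thesis using PiE_arb[OF p False] PiE_arb[OF q False] by simp
    qed
  qed
qed

theorem mainTheorem7:
  fixes X :: "'a topology"
  assumes "compact_space X" and "Hausdorff_space X"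
  shows "\<exists>(Z :: 'a set set set topology) f.
           compact_space Z \<and> Hausdorff_space Z \<and> zero_dimensional Z \<and>
           maxmin_milyutin Z X f"
proof (cases "finite (topspace X)")
  case True
  then show ?thesis using finite_space_maxmin_milyutin assms(2) by blast
next
  case False
  then obtain e :: "nat \<Rightarrow> 'a" where e: "inj e"
    using infinite_iff_countable_subset[THEN iffD1] by blast
  let ?I = "{{x,y} | x y. x \<in> topspace X \<and> y \<in> topspace X \<and> x \<noteq> y}"
  obtain u where "cube_embedding X ?I u" using cube_embedding_pairs[OF assms] ..
  then interpret cube_embedding X ?I u .
  have "card i = 2" if "i \<in> ?I" for i using that by auto
  from inj_on_pair_code[OF e this]
  have "inj_on (\<lambda>p. {{i, e ` {..3*n + p (i,n) + 2}} | i n. i \<in> ?I}) codes"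
    using codes_subset unfolding topspace_digit_cube by (rule inj_on_subset)
  then show ?thesis by (rule maxmin_milyutin_copy)
qed

end
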